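(* Let $n=2$, $m_1,m_2\ge 2$ and $m_*=\min\{m_1,m_2\}$. For any $k\in\{1,\dots,m_*\}$ and $t\in\{1,\dots,2(m_*-k+1)\}$, $$\Pr\left[\text{the clockwork best-response dynamic on } G_{2,\mathbf{m}} \text{ converges to a } 2k\text{-cycle at time } t\right]=\frac{1}{m_{s_{\texttt{c}}(t+2k-1)}}\prod_{i=1}^{t+2k-2}\left(1-\frac{1}{m_{s_{\texttt{c}}(i)}}\left\lfloor\frac{i}{2}\right\rfloor\right).$$
   Context: A random 2-player game $G_{2,\mathbf{m}}$: player $i\in\{1,2\}$ has actions $[m_i]=\{1,\dots,m_i\}$; $\mathcal{M}=[m_1]\times[m_2]$. Payoffs $U_i(\mathbf{a})$, $i\in\{1,2\}$, $\mathbf{a}\in\mathcal{M}$, are drawn independently from a fixed atomless distribution on $\mathbb{R}$; the best response $B_i(a_{-i})=\arg\max_{x\in[m_i]}U_i(x,a_{-i})$ is a.s. unique. The clockwork sequence is $s_{\texttt{c}}(t)=1+((t-1)\bmod 2)$ (player 1 at odd times, player 2 at even times). The clockwork best-response dynamic: $\mathbf{A}^0$ uniform on $\mathcal{M}$ independent of payoffs; for $t\ge 1$ with $i=s_{\texttt{c}}(t)$, $A^t_{-i}=A^{t-1}_{-i}$ and $A^t_i=B_i(A^{t-1}_{-i})$. The dynamic converges to a $2k$-cycle at time $t$ if $t=\inf\{\tau\ge 1:\mathbf{A}^\tau=\mathbf{A}^{\tau+2k}\text{ and }\mathbf{A}^\tau\ne\mathbf{A}^{\tau+2k'}\text{ for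 all }k'\in\{1,\dots,k-1\}\}$ (so from time $t$ on the $2k$ profiles $\mathbf{A}^t,\dots,\mathbf{A}^{t+2k-1}$ repeat forever); $k=1$ corresponds to convergence to a pure Nash equilibrium at time $t$. *)

theory Defs
  imports "HOL-Probability.Probability"
begin

definition sc :: "nat \<Rightarrow> nat" where
  "sc t = 1 + ((t - 1) mod 2)"

definition m_of :: "nat \<Rightarrow> nat \<Rightarrow> nat \<Rightarrow> nat" where
  "m_of m1 m2 i = (if i = 1 then m1 else m2)"

text \<open>Payoffs: U (i, (a1, a2)) is the payoff of player i at profile (a1, a2).
  Best response of player i to the opponent's action b (the unique maximiser,
  which exists almost surely).\<close>
definition br :: "(nat \<times> (nat \<times> nat) \<Rightarrow> real) \<Rightarrow> nat \<Rightarrow> nat \<Rightarrow> nat \<Rightarrow> nat \<Rightarrow> nat" where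
  "br U m1 m2 i b =
     (if i = 1
      then (THE x. x \<in> {1..m1} \<and> (\<forall>y\<in>{1..m1}. y \<noteq> x \<longrightarrow> U (1, (y, b)) < U (1, (x, b))))
      else (THE x. x \<in> {1..m2} \<and> (\<forall>y\<in>{1..m2}. y \<noteq> x \<longrightarrow> U (2, (b, y)) < U (2, (b, x)))))"

fun cw_dyn :: "(nat \<times> (nat \<times> nat) \<Rightarrow> real) \<Rightarrow> nat \<Rightarrow> nat \<Rightarrow> nat \<times> nat \<Rightarrow> nat \<Rightarrow> nat \<times> nat" where
  "cw_dyn U m1 m2 a0 0 = a0"
| "cw_dyn U m1 m2 a0 (Suc t) =
     (let a = cw_dyn U m1 m2 a0 t in
      if sc (Suc t) = 1 then (br U m1 m2 1 (snd a), snd a)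
      else (fst a, br U m1 m2 2 (fst a)))"

definition is_cycle_at :: "(nat \<Rightarrow> nat \<times> nat) \<Rightarrow> nat \<Rightarrow> nat \<Rightarrow> bool" where
  "is_cycle_at A k \<tau> \<longleftrightarrow> A \<tau> = A (\<tau> + 2 * k) \<and> (\<forall>k'\<in>{1..<k}. A \<tau> \<noteq> A (\<tau> + 2 * k'))"

definition converges_at :: "(nat \<Rightarrow> nat \<times> nat) \<Rightarrow> nat \<Rightarrow> nat \<Rightarrow> bool" where
  "converges_at A k t \<longleftrightarrow> 1 \<le> t \<and> is_cycle_at A k t \<and> (\<forall>\<tau>. 1 \<le> \<tau> \<and> \<tau> < t \<longrightarrow> \<not> is_cycle_at A k \<tau>)"

definition game_space :: "real measure \<Rightarrow> nat \<Rightarrow> nat \<Rightarrow> ((nat \<times> (nat \<times> nat) \<Rightarrow> real) \<times> (nat \<times> nat)) measure" where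
  "game_space D m1 m2 =
     (PiM ({1, 2} \<times> ({1..m1} \<times> {1..m2})) (\<lambda>_. D)) \<Otimes>\<^sub>M uniform_count_measure ({1..m1} \<times> {1..m2})"

end

theory Submission
  imports Defs
begin

text \<open>The best responses form a graph on the nodes \<open>(i, b)\<close> (player \<open>i\<close> to move, the opponent
  playing \<open>b\<close>) sending \<open>(i, b)\<close> to \<open>(3 - i, B\<^sub>i b)\<close>, and the clockwork dynamic started at
  \<open>(a, b)\<close> walks along this graph from \<open>(1, b)\<close>. It converges to a \<open>2k\<close>-cycle at time \<open>t\<close>
  iff the walk visits \<open>t - 1 + 2k\<close> distinct nodes and then returns to its node number \<open>t - 1\<close>.
  For i.i.d. atomless payoffs the graph is almost surely well defined and uniformly distributed,
  because swapping two payoffs of one player against a fixed opponent action preserves their law.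
  So it remains to count graphs, fixing the walk one step at a time: the \<open>i\<close>-th step is one of
  the \<open>m_of m1 m2 (sc i)\<close> actions of the moving player and must avoid the \<open>i div 2\<close> earlier
  nodes of the same player, and the closing step must hit one prescribed node.\<close>

section \<open>Counting maps by resampling one value\<close>

text \<open>The map \<open>(H, y) \<mapsto> (H(p H := y), H (p H))\<close> is an involution exchanging the pairs counted
  on the two sides.\<close>

lemma card_resampled_coordinate:
  fixes R :: "('a \<Rightarrow> 'b) set" and p :: "('a \<Rightarrow> 'b) \<Rightarrow> 'a"
  assumes "finite X" and fin_T: "\<And>x. x \<in> X \<Longrightarrow> finite (T x)"
    and R: "R \<subseteq> PiE X T" and p: "\<And>H. H \<in> R \<Longrightarrow> p H \<in> X"
    and card_T: "\<And>H. H \<in> R \<Longrightarrow> card (T (p H)) = m"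
    and S: "\<And>H. H \<in> R \<Longrightarrow> S H \<subseteq> T (p H) \<and> card (S H) = s"
    and resample: "\<And>H y. H \<in> R \<Longrightarrow> y \<in> T (p H) \<Longrightarrow>
      H(p H := y) \<in> R \<and> p (H(p H := y)) = p H \<and> S (H(p H := y)) = S H"
  shows "m * card {H \<in> R. H (p H) \<in> S H} = s * card R"
proof -
  define \<psi> where "\<psi> = (\<lambda>(H, y). (H(p H := y), H (p H)))"
  let ?R' = "{H \<in> R. H (p H) \<in> S H}"
  have "finite R"
    using R by (rule finite_subset) (use assms(1) fin_T in \<open>simp add: finite_PiE\<close>)
  have HpT: "H (p H) \<in> T (p H)" if "H \<in> R" for H
    using R p that by (auto simp: PiE_iff)
  have \<psi>\<psi>: "\<psi> (\<psi> z) = z" if "z \<in> Sigma R (\<lambda>H. T (p H))" for z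
    using that resample by (auto simp: \<psi>_def)
  have "bij_betw \<psi> (Sigma ?R' (\<lambda>H. T (p H))) (Sigma R S)"
  proof (rule bij_betw_byWitness[where f' = \<psi>])
    show "\<psi> ` Sigma ?R' (\<lambda>H. T (p H)) \<subseteq> Sigma R S"
      using resample by (auto simp: \<psi>_def)
    show "\<psi> ` Sigma R S \<subseteq> Sigma ?R' (\<lambda>H. T (p H))"
      using resample S HpT by (fastforce simp: \<psi>_def)
  qed (use \<psi>\<psi> S in blast)+
  then have "card (Sigma ?R' (\<lambda>H. T (p H))) = card (Sigma R S)"
    by (rule bij_betw_same_card)
  moreover have "card (Sigma ?R' (\<lambda>H. T (p H))) = m * card ?R'"
    using \<open>finite R\<close> card_T fin_T p by (subst card_SigmaI) auto
  moreover have "card (Sigma R S) = s * card R"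
    using \<open>finite R\<close> S fin_T p by (subst card_SigmaI) (auto, meson finite_subset)
  ultimately show ?thesis
    by simp
qed

definition self_avoiding :: "'a set \<Rightarrow> ('a \<Rightarrow> 'a set) \<Rightarrow> 'a \<Rightarrow> nat \<Rightarrow> ('a \<Rightarrow> 'a) set" where
  "self_avoiding X T x n = {H \<in> PiE X T. inj_on (\<lambda>i. (H ^^ i) x) {..<n}}"

definition rho_shaped :: "'a set \<Rightarrow> ('a \<Rightarrow> 'a set) \<Rightarrow> 'a \<Rightarrow> nat \<Rightarrow> nat \<Rightarrow> ('a \<Rightarrow> 'a) set" where
  "rho_shaped X T x u d = {H \<in> self_avoiding X T x (u + d). (H ^^ (u + d)) x = (H ^^ u) x}"

lemma self_avoiding_subset: "self_avoiding X T x n \<subseteq> PiE X T"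
  by (auto simp: self_avoiding_def)

lemma self_avoiding_Suc:
  "self_avoiding X T x (Suc n) = {H \<in> self_avoiding X T x n. (H ^^ n) x \<notin> (\<lambda>i. (H ^^ i) x) ` {..<n}}"
  by (auto simp: self_avoiding_def lessThan_Suc)

lemma funpow_in_PiE:
  assumes "H \<in> PiE X T" and "\<And>y. y \<in> X \<Longrightarrow> T y \<subseteq> X" and "x \<in> X"
  shows "(H ^^ i) x \<in> X"
  by (induction i) (use assms in \<open>auto simp: PiE_iff\<close>)

lemma funpow_fun_upd_eq:
  assumes "\<And>j. j < n \<Longrightarrow> (H ^^ j) x \<noteq> p" and "i \<le> n"
  shows "(H(p := y) ^^ i) x = (H ^^ i) x"
  using assms(2) by (induction i) (auto simp: assms(1))

lemma card_self_avoiding_extension: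
  assumes "finite X" and "\<And>y. y \<in> X \<Longrightarrow> finite (T y)" and "\<And>y. y \<in> X \<Longrightarrow> T y \<subseteq> X" and "x \<in> X"
    and card_T: "\<And>H. H \<in> self_avoiding X T x (Suc n) \<Longrightarrow> card (T ((H ^^ n) x)) = m"
    and S: "\<And>H. H \<in> self_avoiding X T x (Suc n) \<Longrightarrow> S H \<subseteq> T ((H ^^ n) x) \<and> card (S H) = s"
    and S_local: "\<And>H H'. H \<in> self_avoiding X T x (Suc n) \<Longrightarrow>
      (\<And>i. i \<le> n \<Longrightarrow> (H' ^^ i) x = (H ^^ i) x) \<Longrightarrow> S H' = S H"
  shows "m * card {H \<in> self_avoiding X T x (Suc n). H ((H ^^ n) x) \<in> S H}
    = s * card (self_avoiding X T x (Suc n))"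
proof (rule card_resampled_coordinate[where X = X and T = T])
  show "(H ^^ n) x \<in> X" if "H \<in> self_avoiding X T x (Suc n)" for H
    using funpow_in_PiE[OF subsetD[OF self_avoiding_subset that] assms(3,4)] .
  fix H y
  assume H: "H \<in> self_avoiding X T x (Suc n)" and y: "y \<in> T ((H ^^ n) x)"
  let ?H' = "H((H ^^ n) x := y)"
  have same: "(?H' ^^ i) x = (H ^^ i) x" if "i \<le> n" for i
  proof (rule funpow_fun_upd_eq[OF _ that])
    show "(H ^^ j) x \<noteq> (H ^^ n) x" if "j < n" for j
      using H that by (auto simp: self_avoiding_def inj_on_def)
  qed
  have "(H ^^ n) x \<in> X"
    using funpow_in_PiE[OF subsetD[OF self_avoiding_subset H] assms(3,4)] .
  then have "?H' \<in> PiE X T"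
    using PiE_fun_upd[of y T "(H ^^ n) x" H X] y H by (simp add: self_avoiding_def insert_absorb)
  moreover have "inj_on (\<lambda>i. (?H' ^^ i) x) {..<Suc n}"
    using H same by (auto simp: self_avoiding_def intro: inj_on_cong[THEN iffD1])
  ultimately show "?H' \<in> self_avoiding X T x (Suc n) \<and> (?H' ^^ n) x = (H ^^ n) x \<and> S ?H' = S H"
    using same S_local[OF H same] by (simp add: self_avoiding_def)
qed (use assms(1,2) card_T S self_avoiding_subset[of X T x "Suc n"] in auto)

section \<open>First cycles of an orbit\<close>

lemma funpow_shift_eq:
  fixes f :: "'a \<Rightarrow> 'a"
  assumes "(f ^^ i) x = (f ^^ j) x"
  shows "(f ^^ (i + n)) x = (f ^^ (j + n)) x"
proof -
  have "(f ^^ (m + n)) x = (f ^^ n) ((f ^^ m) x)" for m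
    by (simp add: funpow_add add.commute[of m])
  then show ?thesis
    using assms by simp
qed

lemma funpow_periodic:
  fixes f :: "'a \<Rightarrow> 'a"
  assumes "(f ^^ (a + d)) x = (f ^^ a) x" and "a \<le> c"
  shows "(f ^^ (c + q * d)) x = (f ^^ c) x"
proof (induction q)
  case (Suc q)
  have "(f ^^ (a + d + (c + q * d - a))) x = (f ^^ (a + (c + q * d - a))) x"
    using funpow_shift_eq[OF assms(1)] .
  then show ?case
    using Suc assms(2) by (simp add: algebra_simps)
qed simp

lemma is_cycle_at_before:
  fixes f :: "nat \<times> nat \<Rightarrow> nat \<times> nat" and x :: "nat \<times> nat"
  defines "w \<equiv> \<lambda>i. (f ^^ i) x"
  assumes cycle: "is_cycle_at w k u" and "w i = w j" and "i < j" and "i < u"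
  shows "is_cycle_at w k i"
proof -
  have shift: "w a = w b \<Longrightarrow> w (a + n) = w (b + n)" for a b n
    unfolding w_def by (rule funpow_shift_eq)
  have "w (u + 2 * k) = w u"
    using cycle by (simp add: is_cycle_at_def)
  then have periodic: "w (c + 2 * k) = w c" if "u \<le> c" for c
    using funpow_periodic[where a = u and d = "2 * k" and q = 1] that by (simp add: w_def)
  define d where "d = j - i"
  have "d \<ge> 1" "w (i + d) = w i"
    using \<open>w i = w j\<close> \<open>i < j\<close> by (auto simp: d_def)
  then have "w (i + u * d) = w i"
    using funpow_periodic[where a = i and c = i and q = u] by (simp add: w_def mult.commute)
  then have "w (i + 2 * k) = w (i + u * d + 2 * k)"
    using shift by metis
  also have "\<dots> = w (i + u * d)"
    using periodic \<open>d \<ge> 1\<close> by (simp add: trans_le_add2)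
  finally have "w i = w (i + 2 * k)"
    using \<open>w (i + u * d) = w i\<close> by simp
  moreover have "w i \<noteq> w (i + 2 * k')" if "k' \<in> {1..<k}" for k'
    using shift[of i "i + 2 * k'" "u - i"] cycle that \<open>i < u\<close> by (auto simp: is_cycle_at_def algebra_simps)
  ultimately show ?thesis
    by (simp add: is_cycle_at_def)
qed

lemma rho_imp_first_cycle:
  assumes inj: "inj_on w {..<u + 2 * k}" and closed: "w (u + 2 * k) = w u" and "k \<ge> 1"
  shows "is_cycle_at w k u \<and> (\<forall>v<u. \<not> is_cycle_at w k v)"
proof -
  have "w u \<noteq> w (u + 2 * k')" if "k' \<in> {1..<k}" for k'
    using inj_onD[OF inj, of u "u + 2 * k'"] that by auto
  then have "is_cycle_at w k u"
    using closed by (simp add: is_cycle_at_def)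
  moreover have "\<not> is_cycle_at w k v" if "v < u" for v
    using inj_onD[OF inj, of v "v + 2 * k"] that \<open>k \<ge> 1\<close> by (auto simp: is_cycle_at_def)
  ultimately show ?thesis
    by blast
qed

lemma first_cycle_iff_rho:
  fixes f :: "nat \<times> nat \<Rightarrow> nat \<times> nat" and x :: "nat \<times> nat"
  defines "w \<equiv> \<lambda>i. (f ^^ i) x"
  assumes parity: "\<And>i j. w i = w j \<Longrightarrow> i mod 2 = j mod 2" and "k \<ge> 1"
  shows "is_cycle_at w k u \<and> (\<forall>v<u. \<not> is_cycle_at w k v)
    \<longleftrightarrow> inj_on w {..<u + 2 * k} \<and> w (u + 2 * k) = w u"
proof
  assume "inj_on w {..<u + 2 * k} \<and> w (u + 2 * k) = w u"
  then show "is_cycle_at w k u \<and> (\<forall>v<u. \<not> is_cycle_at w k v)"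
    using rho_imp_first_cycle \<open>k \<ge> 1\<close> by blast
next
  assume first: "is_cycle_at w k u \<and> (\<forall>v<u. \<not> is_cycle_at w k v)"
  then have closed: "w (u + 2 * k) = w u" and short: "\<And>k'. k' \<in> {1..<k} \<Longrightarrow> w u \<noteq> w (u + 2 * k')"
    by (auto simp: is_cycle_at_def)
  have "w i \<noteq> w j" if "i < j" "j < u + 2 * k" for i j
  proof
    assume eq: "w i = w j"
    show False
    proof (cases "i < u")
      case True
      then show False
        using is_cycle_at_before[of f x k u i j] first eq \<open>i < j\<close> by (simp add: w_def)
    next
      case False
      define k' where "k' = (j - i) div 2"
      have "j = i + 2 * k'"
        using parity[OF eq] \<open>i < j\<close> unfolding k'_def by presburger
      then have k': "j = i + 2 * k'" "k' \<in> {1..<k}"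
        using that False by auto
      have "w (u + 2 * k) = w (u + 2 * k' + 2 * k)"
        using funpow_shift_eq[where f = f and i = i and j = j and n = "u + 2 * k - i"] eq k' that by (simp add: w_def algebra_simps)
      also have "\<dots> = w (u + 2 * k')"
        using funpow_periodic[where a = u and d = "2 * k" and q = 1 and c = "u + 2 * k'"] closed
        by (simp add: w_def)
      finally show False
        using closed short[OF k'(2)] by simp
    qed
  qed
  then have "inj_on w {..<u + 2 * k}"
    by (intro inj_onI) (metis lessThan_iff linorder_neqE_nat)
  then show "inj_on w {..<u + 2 * k} \<and> w (u + 2 * k) = w u"
    using closed by blast
qed

lemma converges_at_iff_first_cycle:
  assumes "\<And>u. is_cycle_at A k (Suc u) \<longleftrightarrow> is_cycle_at w k u" and "t \<ge> 1"
  shows "converges_at A k t \<longleftrightarrow> is_cycle_at w k (t - 1) \<and> (\<forall>v<t - 1. \<not> is_cycle_at w k v)"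
proof -
  obtain s where t: "t = Suc s"
    using assms(2) by (cases t) auto
  have "(\<forall>\<tau>. 1 \<le> \<tau> \<and> \<tau> < Suc s \<longrightarrow> \<not> is_cycle_at A k \<tau>) \<longleftrightarrow> (\<forall>v<s. \<not> is_cycle_at A k (Suc v))"
    by (auto simp: Suc_le_eq gr0_conv_Suc)
  then show ?thesis
    using assms(1) by (simp add: converges_at_def t)
qed

section \<open>Probability\<close>

lemma (in prob_space) prob_exchangeable_partition:
  assumes "finite S" and events: "E ` S \<subseteq> events" and disj: "disjoint_family_on E S"
    and cover: "AE x in M. \<exists>s\<in>S. x \<in> E s"
    and exchangeable: "\<And>s s'. s \<in> S \<Longrightarrow> s' \<in> S \<Longrightarrow> prob (E s) = prob (E s')"
    and "A \<in> events" and A: "\<And>s x. s \<in> S \<Longrightarrow> x \<in> E s \<Longrightarrow> x \<in> A \<longleftrightarrow> s \<in> G"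
  shows "prob A = card (S \<inter> G) / card S"
proof -
  have union: "prob (\<Union>s\<in>S'. E s) = (\<Sum>s\<in>S'. prob (E s))" if "S' \<subseteq> S" for S'
    using that \<open>finite S\<close> events disj
    by (intro finite_measure_finite_Union) (auto intro: finite_subset disjoint_family_on_mono)
  have "prob (\<Union>s\<in>S. E s) = 1"
    using cover events \<open>finite S\<close> by (subst prob_eq_1) (auto intro: sets.finite_UN)
  then obtain s0 where s0: "s0 \<in> S"
    using union[of S] by fastforce
  have sum_const: "(\<Sum>s\<in>S'. prob (E s)) = card S' * prob (E s0)" if "S' \<subseteq> S" for S'
    using exchangeable[OF _ s0] that by (simp add: subset_eq)
  have "prob A = prob (\<Union>s\<in>S \<inter> G. E s)"
  proof (rule finite_measure_eq_AE)
    show "AE x in M. x \<in> A \<longleftrightarrow> x \<in> (\<Union>s\<in>S \<inter> G. E s)"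
      using cover by eventually_elim (use A in blast)
  qed (use \<open>A \<in> events\<close> events \<open>finite S\<close> in auto)
  also have "\<dots> = card (S \<inter> G) * prob (E s0)"
    using union[of "S \<inter> G"] sum_const[of "S \<inter> G"] by simp
  also have "prob (E s0) = 1 / card S"
    using \<open>prob (\<Union>s\<in>S. E s) = 1\<close> union[of S] sum_const[of S]
    by (auto simp: eq_divide_eq mult.commute)
  finally show ?thesis
    by simp
qed

lemma measure_pair_uniform_count_measure:
  assumes "prob_space M" and "finite A" and "A \<noteq> {}"
    and slices: "\<And>a. a \<in> A \<Longrightarrow> {x \<in> space M. P x a} \<in> sets M"
  shows "measure (M \<Otimes>\<^sub>M uniform_count_measure A) {\<omega> \<in> space (M \<Otimes>\<^sub>M uniform_count_measure A). P (fst \<omega>) (snd \<omega>)}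
    = (\<Sum>a\<in>A. measure M {x \<in> space M. P x a}) / card A"
proof -
  let ?N = "uniform_count_measure A"
  interpret M: prob_space M by fact
  interpret N: prob_space ?N
    using assms(2,3) by (rule prob_space_uniform_count_measure)
  interpret MN: pair_prob_space M ?N ..
  have sets_N: "B \<in> sets ?N" if "B \<subseteq> A" for B
    using that by (simp add: sets_uniform_count_measure)
  have "{\<omega> \<in> space (M \<Otimes>\<^sub>M ?N). P (fst \<omega>) (snd \<omega>)} = (\<Union>a\<in>A. {x \<in> space M. P x a} \<times> {a})"
    by (auto simp: space_pair_measure space_uniform_count_measure)
  also have "measure (M \<Otimes>\<^sub>M ?N) \<dots> = (\<Sum>a\<in>A. measure (M \<Otimes>\<^sub>M ?N) ({x \<in> space M. P x a} \<times> {a}))"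
    using slices sets_N \<open>finite A\<close>
    by (intro MN.finite_measure_finite_Union) (auto simp: disjoint_family_on_def)
  also have "\<dots> = (\<Sum>a\<in>A. measure M {x \<in> space M. P x a} / card A)"
  proof (rule sum.cong[OF refl])
    fix a assume "a \<in> A"
    have "emeasure (M \<Otimes>\<^sub>M ?N) ({x \<in> space M. P x a} \<times> {a})
      = emeasure M {x \<in> space M. P x a} * emeasure ?N {a}"
      using slices[OF \<open>a \<in> A\<close>] sets_N \<open>a \<in> A\<close> by (intro N.emeasure_pair_measure_Times) auto
    then show "measure (M \<Otimes>\<^sub>M ?N) ({x \<in> space M. P x a} \<times> {a}) = measure M {x \<in> space M. P x a} / card A"
      using \<open>finite A\<close> \<open>a \<in> A\<close>
      by (simp add: measure_def enn2real_mult emeasure_uniform_count_measure_if divide_ennreal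
          ennreal_of_nat_eq_real_of_nat)
  qed
  finally show ?thesis
    by (simp add: sum_divide_distrib)
qed

lemma measurable_coordinate:
  fixes D :: "'a::topological_space measure" and I :: "'i set"
  assumes "sets D = sets borel"
  shows "(\<lambda>U. U i) \<in> borel_measurable (PiM I (\<lambda>_. D))"
proof (cases "i \<in> I")
  case True
  then show ?thesis
    using measurable_component_singleton[OF True, of "\<lambda>_. D"] measurable_cong_sets[OF refl assms] by blast
next
  case False
  have "(\<lambda>U. U i) \<in> borel_measurable (PiM I (\<lambda>_. D))
    \<longleftrightarrow> (\<lambda>U :: 'i \<Rightarrow> 'a. undefined :: 'a) \<in> borel_measurable (PiM I (\<lambda>_. D))"
    by (rule measurable_cong) (use False in \<open>auto simp: space_PiM dest: PiE_arb\<close>)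
  then show ?thesis
    by simp
qed

lemma AE_PiM_coordinate_neq:
  fixes D :: "real measure"
  assumes "prob_space D" and "sets D = sets borel" and "measure D {x} = 0" and "j \<in> I"
  shows "AE U in PiM I (\<lambda>_. D). x \<noteq> U j"
proof -
  interpret D: prob_space D by fact
  have "AE y in D. x \<noteq> y"
    using assms(3) by (intro AE_I'[of "{x}"]) (auto simp: D.emeasure_eq_measure assms(2))
  moreover have "distr (PiM I (\<lambda>_. D)) D (\<lambda>U. U j) = D"
    using assms by (intro distr_PiM_component) auto
  moreover have "(\<lambda>U. U j) \<in> PiM I (\<lambda>_. D) \<rightarrow>\<^sub>M D"
    using assms by (intro measurable_component_singleton) auto
  moreover have "{y \<in> space D. x \<noteq> y} \<in> sets D"
    by (simp add: assms(2) sets_eq_imp_space_eq[OF assms(2)] Compl_eq[symmetric])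
  ultimately show ?thesis
    using AE_distr_iff[of "\<lambda>U. U j" "PiM I (\<lambda>_. D)" D "\<lambda>y. x \<noteq> y"] by metis
qed

text \<open>Split off coordinate \<open>j\<close>: the product is the image of \<open>D \<Otimes> \<Pi>\<^sub>M (I - {j})\<close> under
  \<open>(x, X) \<mapsto> X(j := x)\<close>, and given \<open>X\<close>, the fresh coordinate \<open>x\<close> avoids \<open>X j'\<close> almost surely.\<close>

lemma AE_PiM_coordinates_distinct:
  fixes D :: "real measure"
  assumes "prob_space D" and "sets D = sets borel" and atomless: "\<And>x. measure D {x} = 0"
    and "j \<in> I" and "j' \<in> I" and "j \<noteq> j'"
  shows "AE U in PiM I (\<lambda>_. D). U j \<noteq> U j'"
proof -
  interpret D: prob_space D by fact
  let ?Q = "PiM (I - {j}) (\<lambda>_. D)"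
  let ?upd = "\<lambda>(x, X). X(j := x)"
  interpret Q: prob_space ?Q
    using assms(1) by (intro prob_space_PiM) auto
  interpret DQ: pair_sigma_finite D ?Q ..
  have upd: "?upd \<in> D \<Otimes>\<^sub>M ?Q \<rightarrow>\<^sub>M PiM I (\<lambda>_. D)"
    using measurable_fun_upd[where I = I and J = "I - {j}" and i = j and N = "D \<Otimes>\<^sub>M ?Q"
        and f = snd and h = fst and M = "\<lambda>_. D"] \<open>j \<in> I\<close>
    by (simp add: case_prod_beta' insert_absorb Un_commute)
  have "{z \<in> space (D \<Otimes>\<^sub>M ?Q). fst z \<noteq> snd z j'} \<in> sets (D \<Otimes>\<^sub>M ?Q)"
  proof (rule sets.sets_Collect_neg, rule measurable_equality_set)
    show "fst \<in> borel_measurable (D \<Otimes>\<^sub>M ?Q)"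
      using measurable_cong_sets[OF refl assms(2)] measurable_fst by blast
    show "(\<lambda>z. snd z j') \<in> borel_measurable (D \<Otimes>\<^sub>M ?Q)"
      using measurable_compose[OF measurable_snd measurable_coordinate[OF assms(2)]] .
  qed
  then have "AE z in D \<Otimes>\<^sub>M ?Q. fst z \<noteq> snd z j'"
    using AE_PiM_coordinate_neq[OF assms(1,2) atomless, of j' "I - {j}"] assms
    by (subst DQ.AE_pair_iff[symmetric]) auto
  moreover have "{U \<in> space (PiM I (\<lambda>_. D)). U j \<noteq> U j'} \<in> sets (PiM I (\<lambda>_. D))"
    by (rule sets.sets_Collect_neg, rule measurable_equality_set)
      (simp_all add: measurable_coordinate[OF assms(2)])
  ultimately have "AE U in distr (D \<Otimes>\<^sub>M ?Q) (PiM I (\<lambda>_. D)) ?upd. U j \<noteq> U j'"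
    using \<open>j \<noteq> j'\<close> by (subst AE_distr_iff[OF upd]) (auto simp: case_prod_beta')
  moreover have "distr (D \<Otimes>\<^sub>M ?Q) (PiM I (\<lambda>_. D)) ?upd = PiM I (\<lambda>_. D)"
    using distr_pair_PiM_eq_PiM[of "I - {j}" "\<lambda>_. D" j] assms(1) \<open>j \<in> I\<close> by (simp add: insert_absorb)
  ultimately show ?thesis
    by metis
qed

lemma AE_PiM_inj_on:
  fixes D :: "real measure"
  assumes "prob_space D" and "sets D = sets borel" and "\<And>x. measure D {x} = 0" and "finite I"
  shows "AE U in PiM I (\<lambda>_. D). inj_on U I"
proof -
  have "AE U in PiM I (\<lambda>_. D). \<forall>j\<in>I. \<forall>j'\<in>I. j \<noteq> j' \<longrightarrow> U j \<noteq> U j'"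
  proof (intro AE_finite_allI \<open>finite I\<close>)
    fix j j' assume "j \<in> I" "j' \<in> I"
    then show "AE U in PiM I (\<lambda>_. D). j \<noteq> j' \<longrightarrow> U j \<noteq> U j'"
      using AE_PiM_coordinates_distinct[OF assms(1-3)] by (cases "j = j'") simp_all
  qed
  then show ?thesis
    by eventually_elim (auto intro: inj_onI)
qed

definition strict_argmax :: "'a set \<Rightarrow> ('a \<Rightarrow> 'b::linorder) \<Rightarrow> 'a \<Rightarrow> bool" where
  "strict_argmax S f x \<longleftrightarrow> x \<in> S \<and> (\<forall>y\<in>S. y \<noteq> x \<longrightarrow> f y < f x)"

lemma strict_argmax_unique:
  assumes "strict_argmax S f x" and "strict_argmax S f x'"
  shows "x = x'"
proof (rule ccontr)
  assume "x \<noteq> x'"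
  then have "f x' < f x" and "f x < f x'"
    using assms by (auto simp: strict_argmax_def)
  then show False
    by simp
qed

lemma strict_argmax_cong: "(\<And>y. y \<in> S \<Longrightarrow> f y = g y) \<Longrightarrow> strict_argmax S f x \<longleftrightarrow> strict_argmax S g x"
  by (auto simp: strict_argmax_def)

lemma strict_argmax_exists:
  assumes "finite S" and "S \<noteq> {}" and "inj_on f S"
  obtains x where "strict_argmax S f x"
proof -
  have "Max (f ` S) \<in> f ` S"
    using assms(1,2) by simp
  then obtain x where x: "x \<in> S" "f x = Max (f ` S)"
    by (metis imageE)
  have "f y < f x" if "y \<in> S" "y \<noteq> x" for y
  proof -
    have "f y \<le> f x"
      unfolding x(2) using that assms(1) by (simp add: Max_ge)
    moreover have "f y \<noteq> f x"
      using inj_onD[OF assms(3)] x(1) that by blast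
    ultimately show ?thesis
      by simp
  qed
  then have "strict_argmax S f x"
    using x(1) by (simp add: strict_argmax_def)
  then show ?thesis
    by (rule that)
qed

lemma strict_argmax_permutes:
  assumes "\<pi> permutes S"
  shows "strict_argmax S (f \<circ> \<pi>) x \<longleftrightarrow> strict_argmax S f (\<pi> x)"
proof -
  have "(\<forall>z\<in>S. z \<noteq> \<pi> x \<longrightarrow> f z < f (\<pi> x)) \<longleftrightarrow> (\<forall>z\<in>\<pi> ` S. z \<noteq> \<pi> x \<longrightarrow> f z < f (\<pi> x))"
    by (simp add: permutes_image[OF assms])
  also have "\<dots> \<longleftrightarrow> (\<forall>y\<in>S. y \<noteq> x \<longrightarrow> f (\<pi> y) < f (\<pi> x))"
    using permutes_inj[OF assms] by (auto simp: inj_eq)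
  finally show ?thesis
    using permutes_in_image[OF assms] by (auto simp: strict_argmax_def)
qed

section \<open>Response graphs\<close>

definition nodes :: "nat \<Rightarrow> nat \<Rightarrow> (nat \<times> nat) set" where
  "nodes m1 m2 = {1} \<times> {1..m2} \<union> {2} \<times> {1..m1}"

definition successors :: "nat \<Rightarrow> nat \<Rightarrow> nat \<times> nat \<Rightarrow> (nat \<times> nat) set" where
  "successors m1 m2 = (\<lambda>(i, b). {3 - i} \<times> {1..m_of m1 m2 i})"

definition response_graphs :: "nat \<Rightarrow> nat \<Rightarrow> (nat \<times> nat \<Rightarrow> nat \<times> nat) set" where
  "response_graphs m1 m2 = PiE (nodes m1 m2) (successors m1 m2)"

abbreviation avoiding_graphs :: "nat \<Rightarrow> nat \<Rightarrow> nat \<Rightarrow> nat \<Rightarrow> (nat \<times> nat \<Rightarrow> nat \<times> nat) set" where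
  "avoiding_graphs m1 m2 b \<equiv> self_avoiding (nodes m1 m2) (successors m1 m2) (1, b)"

lemma finite_nodes [simp]: "finite (nodes m1 m2)"
  by (simp add: nodes_def)

lemma finite_successors [simp]: "finite (successors m1 m2 p)"
  by (simp add: successors_def split: prod.split)

lemma card_successors [simp]: "card (successors m1 m2 (i, b)) = m_of m1 m2 i"
  by (simp add: successors_def card_cartesian_product)

lemma successors_subset_nodes: "p \<in> nodes m1 m2 \<Longrightarrow> successors m1 m2 p \<subseteq> nodes m1 m2"
  by (auto simp: nodes_def successors_def m_of_def)

lemma successor_iff_other_mover:
  assumes "(i, b) \<in> nodes m1 m2" and "(j, c) \<in> nodes m1 m2"
  shows "(j, c) \<in> successors m1 m2 (i, b) \<longleftrightarrow> j \<noteq> i"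
  using assms by (cases "i = 1"; cases "j = 1") (auto simp: nodes_def successors_def m_of_def)

lemma response_graphs_nonempty: "m1 \<ge> 1 \<Longrightarrow> m2 \<ge> 1 \<Longrightarrow> response_graphs m1 m2 \<noteq> {}"
  by (auto simp: response_graphs_def PiE_eq_empty_iff successors_def m_of_def split: if_splits)

lemma response_in_actions:
  "H \<in> response_graphs m1 m2 \<Longrightarrow> (i, b) \<in> nodes m1 m2 \<Longrightarrow> snd (H (i, b)) \<in> {1..m_of m1 m2 i}"
  by (auto simp: response_graphs_def successors_def PiE_iff)

lemma avoiding_graphs_subset: "avoiding_graphs m1 m2 b n \<subseteq> response_graphs m1 m2"
  by (simp add: response_graphs_def self_avoiding_subset)

lemma response_graph_walk:
  assumes "H \<in> response_graphs m1 m2" and "b \<in> {1..m2}"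
  shows "(H ^^ n) (1, b) \<in> nodes m1 m2 \<and> fst ((H ^^ n) (1, b)) = sc (Suc n)"
proof (induction n)
  case 0
  then show ?case
    using assms(2) by (simp add: nodes_def sc_def)
next
  case (Suc n)
  then have "H ((H ^^ n) (1, b)) \<in> successors m1 m2 ((H ^^ n) (1, b))"
    using assms(1) by (auto simp: response_graphs_def PiE_iff)
  then show ?case
    using Suc by (auto simp: successors_def nodes_def sc_def mod_Suc m_of_def)
qed

lemma sc_Suc_eq_iff: "i \<le> n \<Longrightarrow> sc (Suc i) = sc (Suc n) \<longleftrightarrow> even (n - i)"
  unfolding sc_def by (simp add: even_iff_mod_2_eq_zero) presburger

lemma sc_Suc_Suc: "sc (Suc (Suc n)) = 3 - sc (Suc n)"
  by (simp add: sc_def mod_Suc)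

lemma card_odd_distance: "card {i. i \<le> n \<and> odd (n - i)} = Suc n div 2"
proof (induction n)
  case (Suc n)
  have "{i. i \<le> Suc n \<and> odd (Suc n - i)} = {..n} - {i. i \<le> n \<and> odd (n - i)}"
    by (auto simp: Suc_diff_le le_Suc_eq)
  then show ?case
    using Suc by (simp add: card_Diff_subset subset_eq)
qed simp

lemma card_visited_successors:
  assumes "H \<in> avoiding_graphs m1 m2 b (Suc n)" and "b \<in> {1..m2}"
  defines "w \<equiv> \<lambda>i. (H ^^ i) (1, b)"
  shows "card (successors m1 m2 (w n) \<inter> w ` {..n}) = Suc n div 2"
proof -
  have walk: "w i \<in> nodes m1 m2 \<and> fst (w i) = sc (Suc i)" for i
    unfolding w_def by (rule response_graph_walk[OF subsetD[OF avoiding_graphs_subset assms(1)] assms(2)])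
  have "w i \<in> successors m1 m2 (w n) \<longleftrightarrow> sc (Suc i) \<noteq> sc (Suc n)" for i
    using successor_iff_other_mover walk by (metis prod.collapse)
  then have "w i \<in> successors m1 m2 (w n) \<longleftrightarrow> odd (n - i)" if "i \<le> n" for i
    using sc_Suc_eq_iff[OF that] by simp
  then have "successors m1 m2 (w n) \<inter> w ` {..n} = w ` {i. i \<le> n \<and> odd (n - i)}"
    by auto
  moreover have "inj_on w {..n}"
    using assms(1) by (simp add: self_avoiding_def w_def lessThan_Suc_atMost)
  ultimately show ?thesis
    unfolding card_odd_distance[symmetric] by (auto intro: card_image inj_on_subset)
qed

lemma visited_successors_le:
  assumes "H \<in> avoiding_graphs m1 m2 b (Suc n)" and "b \<in> {1..m2}"
  shows "Suc n div 2 \<le> m_of m1 m2 (sc (Suc n))"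
proof -
  let ?p = "(H ^^ n) (1, b)"
  have "?p \<in> nodes m1 m2 \<and> fst ?p = sc (Suc n)"
    using response_graph_walk[OF subsetD[OF avoiding_graphs_subset assms(1)] assms(2)] .
  then have "card (successors m1 m2 ?p) = m_of m1 m2 (sc (Suc n))"
    by (metis card_successors prod.collapse)
  moreover have "card (successors m1 m2 ?p \<inter> (\<lambda>i. (H ^^ i) (1, b)) ` {..n}) \<le> card (successors m1 m2 ?p)"
    by (rule card_mono) auto
  ultimately show ?thesis
    using card_visited_successors[OF assms] by simp
qed

lemma card_avoiding_graphs_Suc:
  assumes b: "b \<in> {1..m2}"
  shows "m_of m1 m2 (sc (Suc n)) * card (avoiding_graphs m1 m2 b (Suc (Suc n)))
    = (m_of m1 m2 (sc (Suc n)) - Suc n div 2) * card (avoiding_graphs m1 m2 b (Suc n))"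
proof -
  let ?R = "avoiding_graphs m1 m2 b (Suc n)"
  let ?m = "m_of m1 m2 (sc (Suc n))"
  define w :: "(nat \<times> nat \<Rightarrow> nat \<times> nat) \<Rightarrow> nat \<Rightarrow> nat \<times> nat"
    where "w H i = (H ^^ i) (1, b)" for H i
  define S where "S H = successors m1 m2 (w H n) - w H ` {..n}" for H
  have walk: "w H n \<in> nodes m1 m2 \<and> fst (w H n) = sc (Suc n)" if "H \<in> ?R" for H
    unfolding w_def by (rule response_graph_walk[OF subsetD[OF avoiding_graphs_subset that] b])
  then have card_succ: "card (successors m1 m2 (w H n)) = ?m" if "H \<in> ?R" for H
    using that by (metis card_successors prod.collapse)
  have card_S: "card (S H) = ?m - Suc n div 2" if "H \<in> ?R" for H
    using card_visited_successors[OF that b] card_succ[OF that]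
    by (simp add: S_def w_def[abs_def] card_Diff_subset_Int)
  have "?m * card {H \<in> ?R. H (w H n) \<in> S H} = (?m - Suc n div 2) * card ?R"
    unfolding w_def
  proof (rule card_self_avoiding_extension)
    show "(1, b) \<in> nodes m1 m2"
      using b by (simp add: nodes_def)
    show "card (successors m1 m2 ((H ^^ n) (1, b))) = ?m" if "H \<in> ?R" for H
      using card_succ[OF that] by (simp add: w_def)
    show "S H \<subseteq> successors m1 m2 ((H ^^ n) (1, b)) \<and> card (S H) = ?m - Suc n div 2"
      if "H \<in> ?R" for H
      using card_S[OF that] by (auto simp: S_def w_def)
    show "S H' = S H" if "\<And>i. i \<le> n \<Longrightarrow> (H' ^^ i) (1, b) = (H ^^ i) (1, b)" for H H'
      using that by (simp add: S_def w_def)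
  qed (simp_all add: successors_subset_nodes)
  moreover have "{H \<in> ?R. H (w H n) \<in> S H} = avoiding_graphs m1 m2 b (Suc (Suc n))"
  proof -
    have "H (w H n) \<in> successors m1 m2 (w H n)" if "H \<in> ?R" for H
      using walk[OF that] that by (auto simp: self_avoiding_def PiE_iff)
    then show ?thesis
      unfolding self_avoiding_Suc[of _ _ _ "Suc n"] by (auto simp: S_def w_def lessThan_Suc_atMost)
  qed
  ultimately show ?thesis
    by simp
qed

lemma card_avoiding_graphs:
  assumes "m1 \<ge> 1" and "m2 \<ge> 1" and b: "b \<in> {1..m2}"
  shows "real (card (avoiding_graphs m1 m2 b (Suc n)))
    = real (card (response_graphs m1 m2)) * (\<Prod>i = 1..n. 1 - 1 / real (m_of m1 m2 (sc i)) * real (i div 2))"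
proof (induction n)
  case 0
  then show ?case
    by (simp add: self_avoiding_def response_graphs_def lessThan_Suc)
next
  case (Suc n)
  let ?m = "m_of m1 m2 (sc (Suc n))"
  have "?m > 0"
    using assms(1,2) by (simp add: m_of_def)
  have "real (card (avoiding_graphs m1 m2 b (Suc (Suc n))))
    = real (card (avoiding_graphs m1 m2 b (Suc n))) * (1 - 1 / real ?m * real (Suc n div 2))"
  proof (cases "avoiding_graphs m1 m2 b (Suc n) = {}")
    case True
    then show ?thesis
      by (simp add: self_avoiding_Suc[of _ _ _ "Suc n"])
  next
    case False
    then have "Suc n div 2 \<le> ?m"
      using visited_successors_le[OF _ b] by blast
    then show ?thesis
      using card_avoiding_graphs_Suc[OF b, of m1 n] \<open>?m > 0\<close>
      by (auto simp: of_nat_diff field_simps dest!: arg_cong[where f = real])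
  qed
  then show ?case
    using Suc by (simp add: prod.nat_ivl_Suc' mult_ac)
qed

lemma card_rho_shaped_graphs:
  assumes "k \<ge> 1" and b: "b \<in> {1..m2}"
  shows "m_of m1 m2 (sc (u + 2 * k)) * card (rho_shaped (nodes m1 m2) (successors m1 m2) (1, b) u (2 * k))
    = card (avoiding_graphs m1 m2 b (u + 2 * k))"
proof -
  define n where "n = u + 2 * k - 1"
  have n: "Suc n = u + 2 * k" "u \<le> n" "odd (n - u)"
    using assms(1) by (auto simp: n_def)
  let ?R = "avoiding_graphs m1 m2 b (Suc n)"
  have walk: "(H ^^ i) (1, b) \<in> nodes m1 m2 \<and> fst ((H ^^ i) (1, b)) = sc (Suc i)" if "H \<in> ?R" for H i
    by (rule response_graph_walk[OF subsetD[OF avoiding_graphs_subset that] b])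
  have "m_of m1 m2 (sc (Suc n)) * card {H \<in> ?R. H ((H ^^ n) (1, b)) \<in> {(H ^^ u) (1, b)}} = 1 * card ?R"
  proof (rule card_self_avoiding_extension)
    show "(1, b) \<in> nodes m1 m2"
      using b by (simp add: nodes_def)
    show "card (successors m1 m2 ((H ^^ n) (1, b))) = m_of m1 m2 (sc (Suc n))" if "H \<in> ?R" for H
      using walk[OF that, of n] by (metis card_successors prod.collapse)
    show "{(H ^^ u) (1, b)} \<subseteq> successors m1 m2 ((H ^^ n) (1, b)) \<and> card {(H ^^ u) (1, b)} = 1"
      if "H \<in> ?R" for H
    proof -
      have "(H ^^ u) (1, b) \<in> successors m1 m2 ((H ^^ n) (1, b)) \<longleftrightarrow> sc (Suc u) \<noteq> sc (Suc n)"
        using successor_iff_other_mover walk[OF that] by (metis prod.collapse)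
      then show ?thesis
        using sc_Suc_eq_iff[OF n(2)] n(3) by simp
    qed
  qed (use n(2) successors_subset_nodes in auto)
  then show ?thesis
    unfolding rho_shaped_def n(1)[symmetric] by simp
qed

lemma card_rho_shaped_ratio:
  assumes "m1 \<ge> 1" and "m2 \<ge> 1" and "k \<ge> 1" and "t \<ge> 1" and "b \<in> {1..m2}"
  shows "card (rho_shaped (nodes m1 m2) (successors m1 m2) (1, b) (t - 1) (2 * k)) / card (response_graphs m1 m2)
    = 1 / real (m_of m1 m2 (sc (t + 2 * k - 1)))
      * (\<Prod>i = 1..t + 2 * k - 2. 1 - 1 / real (m_of m1 m2 (sc i)) * real (i div 2))"
proof -
  define n where "n = t + 2 * k - 2"
  have n: "t - 1 + 2 * k = Suc n" "t + 2 * k - 1 = Suc n"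
    using assms(3,4) by (simp_all add: n_def)
  have "m_of m1 m2 (sc (Suc n)) * card (rho_shaped (nodes m1 m2) (successors m1 m2) (1, b) (t - 1) (2 * k))
    = card (avoiding_graphs m1 m2 b (Suc n))"
    using card_rho_shaped_graphs[OF assms(3,5), of m1 "t - 1"] unfolding n .
  then have eq: "real (m_of m1 m2 (sc (Suc n)))
      * card (rho_shaped (nodes m1 m2) (successors m1 m2) (1, b) (t - 1) (2 * k))
    = real (card (response_graphs m1 m2)) * (\<Prod>i = 1..n. 1 - 1 / real (m_of m1 m2 (sc i)) * real (i div 2))"
    unfolding card_avoiding_graphs[OF assms(1,2,5), symmetric] by (metis of_nat_mult)
  have pos: "card (response_graphs m1 m2) > 0" "m_of m1 m2 (sc (Suc n)) > 0"
    using response_graphs_nonempty[OF assms(1,2)] assms(1,2)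
    by (simp_all add: response_graphs_def card_gt_0_iff finite_PiE m_of_def)
  have div: "r / h = 1 / a * p" if "a * r = h * p" "h > 0" "a > 0" for a r h p :: real
    using that by (simp add: field_simps)
  show ?thesis
    unfolding n(2) n_def[symmetric] using pos by (intro div[OF eq]) simp_all
qed

section \<open>The clockwork dynamic walks along the best-response graph\<close>

definition br_graph :: "(nat \<times> (nat \<times> nat) \<Rightarrow> real) \<Rightarrow> nat \<Rightarrow> nat \<Rightarrow> nat \<times> nat \<Rightarrow> nat \<times> nat" where
  "br_graph U m1 m2 = (\<lambda>(i, b) \<in> nodes m1 m2. (3 - i, br U m1 m2 i b))"

lemma br_graph_apply: "p \<in> nodes m1 m2 \<Longrightarrow> br_graph U m1 m2 p = (3 - fst p, br U m1 m2 (fst p) (snd p))"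
  by (cases p) (simp add: br_graph_def)

lemma cw_dyn_Suc_walk:
  assumes G: "br_graph U m1 m2 \<in> response_graphs m1 m2" and a0: "snd a0 \<in> {1..m2}"
  defines "w \<equiv> \<lambda>i. (br_graph U m1 m2 ^^ i) (1, snd a0)"
  shows "cw_dyn U m1 m2 a0 (Suc n) =
    (if sc (Suc n) = 1 then (snd (w (Suc n)), snd (w n)) else (snd (w n), snd (w (Suc n))))"
proof (induction n)
  case 0
  then show ?case
    using a0 by (simp add: w_def br_graph_def nodes_def sc_def)
next
  case (Suc n)
  have step: "w (Suc i) = (3 - sc (Suc i), br U m1 m2 (sc (Suc i)) (snd (w i)))" for i
    using response_graph_walk[OF G a0, of i] br_graph_apply by (simp add: w_def)
  have "sc (Suc n) = 1 \<or> sc (Suc n) = 2"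
    by (auto simp: sc_def)
  then show ?case
    using Suc.IH step[of "Suc n"] sc_Suc_Suc[of n] by (auto simp: Let_def)
qed

text \<open>Profiles an even number of steps apart coincide iff the corresponding nodes of the walk do;
  so cycles of the dynamic are cycles of the walk, shifted by one step.\<close>

lemma cw_dyn_eq_iff_walk_eq:
  assumes G: "br_graph U m1 m2 \<in> response_graphs m1 m2" and a0: "snd a0 \<in> {1..m2}"
    and "i mod 2 = j mod 2"
  defines "w \<equiv> \<lambda>i. (br_graph U m1 m2 ^^ i) (1, snd a0)"
  shows "cw_dyn U m1 m2 a0 (Suc i) = cw_dyn U m1 m2 a0 (Suc j) \<longleftrightarrow> w i = w j"
proof -
  have mover: "fst (w n) = sc (Suc n)" for n
    using response_graph_walk[OF G a0] by (simp add: w_def)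
  have A: "cw_dyn U m1 m2 a0 (Suc n)
    = (if sc (Suc n) = 1 then (snd (w (Suc n)), snd (w n)) else (snd (w n), snd (w (Suc n))))" for n
    unfolding w_def by (rule cw_dyn_Suc_walk[OF G a0])
  have "sc (Suc i) = sc (Suc j)"
    using assms(3) by (simp add: sc_def)
  then have "w i = w j \<longleftrightarrow> snd (w i) = snd (w j)"
    using mover[of i] mover[of j] by (simp add: prod_eq_iff)
  moreover have "w (Suc i) = w (Suc j)" if "w i = w j"
    using that by (simp add: w_def)
  ultimately show ?thesis
    unfolding A using \<open>sc (Suc i) = sc (Suc j)\<close> by auto
qed

lemma converges_at_iff_rho_shaped:
  assumes G: "br_graph U m1 m2 \<in> response_graphs m1 m2" and a0: "snd a0 \<in> {1..m2}"
    and "k \<ge> 1" and "t \<ge> 1"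
  shows "converges_at (cw_dyn U m1 m2 a0) k t
    \<longleftrightarrow> br_graph U m1 m2 \<in> rho_shaped (nodes m1 m2) (successors m1 m2) (1, snd a0) (t - 1) (2 * k)"
proof -
  let ?A = "cw_dyn U m1 m2 a0"
  define w where "w = (\<lambda>i. (br_graph U m1 m2 ^^ i) (1, snd a0))"
  have parity: "i mod 2 = j mod 2" if "w i = w j" for i j
    using response_graph_walk[OF G a0, of i] response_graph_walk[OF G a0, of j] that
    by (simp add: w_def sc_def)
  have "is_cycle_at ?A k (Suc u) \<longleftrightarrow> is_cycle_at w k u" for u
  proof -
    have "?A (Suc u) = ?A (Suc u + 2 * k') \<longleftrightarrow> w u = w (u + 2 * k')" for k'
      using cw_dyn_eq_iff_walk_eq[OF G a0, of u "u + 2 * k'"] by (simp add: w_def)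
    then show ?thesis
      by (simp add: is_cycle_at_def)
  qed
  then have "converges_at ?A k t \<longleftrightarrow> is_cycle_at w k (t - 1) \<and> (\<forall>v<t - 1. \<not> is_cycle_at w k v)"
    using \<open>t \<ge> 1\<close> by (rule converges_at_iff_first_cycle)
  also have "\<dots> \<longleftrightarrow> inj_on w {..<t - 1 + 2 * k} \<and> w (t - 1 + 2 * k) = w (t - 1)"
    unfolding w_def using parity[unfolded w_def] \<open>k \<ge> 1\<close> by (rule first_cycle_iff_rho)
  also have "\<dots> \<longleftrightarrow> br_graph U m1 m2 \<in> rho_shaped (nodes m1 m2) (successors m1 m2) (1, snd a0) (t - 1) (2 * k)"
    using G by (simp add: rho_shaped_def self_avoiding_def response_graphs_def w_def)
  finally show ?thesis .
qed

section \<open>The best-response graph is uniformly distributed\<close>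

definition payoff_index :: "nat \<Rightarrow> nat \<Rightarrow> nat \<Rightarrow> nat \<times> (nat \<times> nat)" where
  "payoff_index i b x = (if i = 1 then (1, (x, b)) else (2, (b, x)))"

definition payoff_space :: "real measure \<Rightarrow> nat \<Rightarrow> nat \<Rightarrow> (nat \<times> (nat \<times> nat) \<Rightarrow> real) measure" where
  "payoff_space D m1 m2 = PiM ({1, 2} \<times> ({1..m1} \<times> {1..m2})) (\<lambda>_. D)"

text \<open>The payoffs whose strict best responses form the graph \<open>H\<close>. Off the union of these events
  some best response is a junk value of \<open>THE\<close>.\<close>

definition graph_event :: "real measure \<Rightarrow> nat \<Rightarrow> nat \<Rightarrow> (nat \<times> nat \<Rightarrow> nat \<times> nat) \<Rightarrow> (nat \<times> (nat \<times> nat) \<Rightarrow> real) set" where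
  "graph_event D m1 m2 H = {U \<in> space (payoff_space D m1 m2). \<forall>p\<in>nodes m1 m2.
     strict_argmax {1..m_of m1 m2 (fst p)} (\<lambda>x. U (payoff_index (fst p) (snd p) x)) (snd (H p))}"

lemma br_eq_THE:
  "br U m1 m2 i b = (THE x. strict_argmax {1..m_of m1 m2 i} (\<lambda>x. U (payoff_index i b x)) x)"
  by (cases "i = 1") (simp_all add: br_def strict_argmax_def payoff_index_def m_of_def)

lemma br_eqI: "strict_argmax {1..m_of m1 m2 i} (\<lambda>x. U (payoff_index i b x)) x \<Longrightarrow> br U m1 m2 i b = x"
  unfolding br_eq_THE by (rule the_equality) (auto intro: strict_argmax_unique)

lemma payoff_index_in:
  "(i, b) \<in> nodes m1 m2 \<Longrightarrow> x \<in> {1..m_of m1 m2 i} \<Longrightarrow> payoff_index i b x \<in> {1, 2} \<times> ({1..m1} \<times> {1..m2})"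
  by (cases "i = 1") (auto simp: nodes_def payoff_index_def m_of_def)

lemma prob_space_payoff_space: "prob_space D \<Longrightarrow> prob_space (payoff_space D m1 m2)"
  unfolding payoff_space_def by (rule prob_space_PiM) simp

lemma game_space_eq: "game_space D m1 m2 = payoff_space D m1 m2 \<Otimes>\<^sub>M uniform_count_measure ({1..m1} \<times> {1..m2})"
  by (simp add: game_space_def payoff_space_def)

lemma measurable_payoff:
  "sets D = sets borel \<Longrightarrow> (\<lambda>U. U j) \<in> borel_measurable (payoff_space D m1 m2)"
  unfolding payoff_space_def by (rule measurable_coordinate)

lemma sets_graph_event:
  assumes "sets D = sets borel"
  shows "graph_event D m1 m2 H \<in> sets (payoff_space D m1 m2)"
proof -
  note [measurable] = measurable_payoff[OF assms]
  show ?thesis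
    unfolding graph_event_def strict_argmax_def by measurable
qed

lemma br_graph_eq:
  assumes "H \<in> response_graphs m1 m2" and "U \<in> graph_event D m1 m2 H"
  shows "br_graph U m1 m2 = H"
proof (rule ext)
  fix p
  show "br_graph U m1 m2 p = H p"
  proof (cases "p \<in> nodes m1 m2")
    case True
    then have "H p \<in> successors m1 m2 p"
      using assms(1) by (simp add: response_graphs_def PiE_iff)
    moreover have "strict_argmax {1..m_of m1 m2 (fst p)} (\<lambda>x. U (payoff_index (fst p) (snd p) x)) (snd (H p))"
      using assms(2) True unfolding graph_event_def by blast
    then have "br U m1 m2 (fst p) (snd p) = snd (H p)"
      by (rule br_eqI)
    ultimately show ?thesis
      using True br_graph_apply by (auto simp: successors_def split: prod.splits)
  next
    case False
    have "H p = undefined"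
      using assms(1) False unfolding response_graphs_def by (rule PiE_arb)
    then show ?thesis
      using False by (simp add: br_graph_def)
  qed
qed

lemma strict_argmax_br:
  assumes "inj_on U ({1, 2} \<times> ({1..m1} \<times> {1..m2}))" and "m1 \<ge> 1" and "m2 \<ge> 1"
    and "(i, b) \<in> nodes m1 m2"
  shows "strict_argmax {1..m_of m1 m2 i} (\<lambda>x. U (payoff_index i b x)) (br U m1 m2 i b)"
proof -
  have "{1..m_of m1 m2 i} \<noteq> {}"
    using assms(2,3) by (simp add: m_of_def)
  moreover have "inj_on (\<lambda>x. U (payoff_index i b x)) {1..m_of m1 m2 i}"
  proof (rule inj_onI)
    fix x y
    assume "x \<in> {1..m_of m1 m2 i}" "y \<in> {1..m_of m1 m2 i}"
      and eq: "U (payoff_index i b x) = U (payoff_index i b y)"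
    then have "payoff_index i b x = payoff_index i b y"
      using payoff_index_in[OF assms(4)] by (intro inj_onD[OF assms(1) eq]) simp_all
    then show "x = y"
      by (simp add: payoff_index_def split: if_splits)
  qed
  ultimately obtain x where x: "strict_argmax {1..m_of m1 m2 i} (\<lambda>x. U (payoff_index i b x)) x"
    by (rule strict_argmax_exists[OF finite_atLeastAtMost])
  moreover from x have "br U m1 m2 i b = x"
    by (rule br_eqI)
  ultimately show ?thesis
    by simp
qed

lemma AE_graph_event:
  assumes "prob_space D" and "sets D = sets borel" and "\<And>x. measure D {x} = 0"
    and "m1 \<ge> 1" and "m2 \<ge> 1"
  shows "AE U in payoff_space D m1 m2. \<exists>H\<in>response_graphs m1 m2. U \<in> graph_event D m1 m2 H"
proof -
  have "AE U in payoff_space D m1 m2. inj_on U ({1, 2} \<times> ({1..m1} \<times> {1..m2}))"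
    unfolding payoff_space_def using assms(1-3) by (intro AE_PiM_inj_on) simp_all
  with AE_space show ?thesis
  proof eventually_elim
    case (elim U)
    have br: "strict_argmax {1..m_of m1 m2 (fst p)} (\<lambda>x. U (payoff_index (fst p) (snd p) x))
        (br U m1 m2 (fst p) (snd p))" if "p \<in> nodes m1 m2" for p
      using strict_argmax_br[OF elim(2) assms(4,5)] that by simp
    have "br_graph U m1 m2 \<in> response_graphs m1 m2"
      unfolding response_graphs_def
    proof (rule PiE_I)
      show "br_graph U m1 m2 p \<in> successors m1 m2 p" if "p \<in> nodes m1 m2" for p
        using br[OF that] br_graph_apply[OF that] by (cases p) (simp add: successors_def strict_argmax_def)
      show "br_graph U m1 m2 p = undefined" if "p \<notin> nodes m1 m2" for p
        using that by (simp add: br_graph_def)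
    qed
    moreover have "U \<in> graph_event D m1 m2 (br_graph U m1 m2)"
      using br elim(1) br_graph_apply by (simp add: graph_event_def)
    ultimately show ?case
      by blast
  qed
qed

definition node_swap :: "(nat \<times> nat \<Rightarrow> nat \<times> nat) \<Rightarrow> (nat \<times> nat \<Rightarrow> nat \<times> nat) \<Rightarrow> nat \<times> nat \<Rightarrow> nat \<Rightarrow> nat" where
  "node_swap H H' p = Transposition.transpose (snd (H p)) (snd (H' p))"

definition payoff_swap :: "(nat \<times> nat \<Rightarrow> nat \<times> nat) \<Rightarrow> (nat \<times> nat \<Rightarrow> nat \<times> nat) \<Rightarrow> nat \<times> nat \<times> nat \<Rightarrow> nat \<times> nat \<times> nat" where
  "payoff_swap H H' = (\<lambda>(i, x, y). if i = 1 then (1, node_swap H H' (1, y) x, y) else (i, x, node_swap H H' (2, x) y))"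

lemma node_swap_permutes:
  assumes "H \<in> response_graphs m1 m2" and "H' \<in> response_graphs m1 m2" and "(i, b) \<in> nodes m1 m2"
  shows "node_swap H H' (i, b) permutes {1..m_of m1 m2 i}"
  unfolding node_swap_def using response_in_actions[OF assms(1,3)] response_in_actions[OF assms(2,3)]
  by (rule permutes_swap_id)

lemma payoff_swap_payoff_index:
  "(i, b) \<in> nodes m1 m2 \<Longrightarrow> payoff_swap H H' (payoff_index i b x) = payoff_index i b (node_swap H H' (i, b) x)"
  by (auto simp: payoff_swap_def payoff_index_def nodes_def)

lemma payoff_swap_involution: "payoff_swap H H' (payoff_swap H H' j) = j"
  by (auto simp: payoff_swap_def node_swap_def split: prod.splits)

lemma payoff_swap_in:
  assumes "H \<in> response_graphs m1 m2" and "H' \<in> response_graphs m1 m2"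
  shows "payoff_swap H H' \<in> {1, 2} \<times> ({1..m1} \<times> {1..m2}) \<rightarrow> {1, 2} \<times> ({1..m1} \<times> {1..m2})"
proof -
  have "node_swap H H' (1, y) x \<in> {1..m1}" if "x \<in> {1..m1}" "y \<in> {1..m2}" for x y
    using permutes_in_image[OF node_swap_permutes[OF assms, of 1 y]] that by (simp add: nodes_def m_of_def)
  moreover have "node_swap H H' (2, x) y \<in> {1..m2}" if "x \<in> {1..m1}" "y \<in> {1..m2}" for x y
    using permutes_in_image[OF node_swap_permutes[OF assms, of 2 x]] that by (simp add: nodes_def m_of_def)
  ultimately show ?thesis
    by (auto simp: payoff_swap_def)
qed

text \<open>Swapping, in the payoff row of every node, the two actions chosen there by \<open>H\<close> and \<open>H'\<close>
  permutes the i.i.d. coordinates, hence preserves the law of the payoffs, and it maps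
  \<open>graph_event H\<close> onto \<open>graph_event H'\<close>.\<close>

lemma emeasure_graph_event_eq:
  assumes "prob_space D" and "sets D = sets borel"
    and H: "H \<in> response_graphs m1 m2" and H': "H' \<in> response_graphs m1 m2"
  shows "emeasure (payoff_space D m1 m2) (graph_event D m1 m2 H)
    = emeasure (payoff_space D m1 m2) (graph_event D m1 m2 H')"
proof -
  let ?I = "{1, 2} \<times> ({1..m1} \<times> {1..m2})"
  let ?P = "payoff_space D m1 m2"
  define \<rho> where "\<rho> = (\<lambda>U :: nat \<times> nat \<times> nat \<Rightarrow> real. \<lambda>j\<in>?I. U (payoff_swap H H' j))"
  have "inj_on (payoff_swap H H') ?I"
    by (metis inj_onI payoff_swap_involution)
  then have distr: "distr ?P ?P \<rho> = ?P"
    using distr_PiM_reindex[of ?I "\<lambda>_. D" "payoff_swap H H'" ?I] payoff_swap_in[OF H H'] assms(1)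
    by (simp add: payoff_space_def \<rho>_def)
  have \<rho>_meas: "\<rho> \<in> ?P \<rightarrow>\<^sub>M ?P"
    unfolding \<rho>_def payoff_space_def using payoff_swap_in[OF H H']
    by (intro measurable_restrict measurable_component_singleton) auto
  have "strict_argmax {1..m_of m1 m2 i} (\<lambda>x. \<rho> U (payoff_index i b x)) (snd (H' (i, b)))
    \<longleftrightarrow> strict_argmax {1..m_of m1 m2 i} (\<lambda>x. U (payoff_index i b x)) (snd (H (i, b)))"
    if "(i, b) \<in> nodes m1 m2" for U i b
  proof -
    have "strict_argmax {1..m_of m1 m2 i} (\<lambda>x. \<rho> U (payoff_index i b x)) (snd (H' (i, b)))
      \<longleftrightarrow> strict_argmax {1..m_of m1 m2 i} ((\<lambda>x. U (payoff_index i b x)) \<circ> node_swap H H' (i, b))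
        (snd (H' (i, b)))"
      using payoff_index_in[OF that] payoff_swap_payoff_index[OF that]
      by (intro strict_argmax_cong) (simp add: \<rho>_def)
    also have "\<dots> \<longleftrightarrow> strict_argmax {1..m_of m1 m2 i} (\<lambda>x. U (payoff_index i b x)) (snd (H (i, b)))"
      unfolding strict_argmax_permutes[OF node_swap_permutes[OF H H' that]] by (simp add: node_swap_def)
    finally show ?thesis .
  qed
  then have "\<rho> -` graph_event D m1 m2 H' \<inter> space ?P = graph_event D m1 m2 H"
    using measurable_space[OF \<rho>_meas] by (auto simp: graph_event_def)
  moreover have "emeasure ?P (graph_event D m1 m2 H') = emeasure ?P (\<rho> -` graph_event D m1 m2 H' \<inter> space ?P)"
    using emeasure_distr[OF \<rho>_meas sets_graph_event[OF assms(2)]] distr by simp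
  ultimately show ?thesis
    by simp
qed

lemma measurable_br:
  assumes "sets D = sets borel"
  shows "(\<lambda>U. br U m1 m2 i b) \<in> payoff_space D m1 m2 \<rightarrow>\<^sub>M count_space UNIV"
proof -
  note [measurable] = measurable_payoff[OF assms]
  show ?thesis
    unfolding br_eq_THE
  proof (rule measurable_THE)
    show "Measurable.pred (payoff_space D m1 m2) (\<lambda>U. strict_argmax {1..m_of m1 m2 i} (\<lambda>x. U (payoff_index i b x)) x)"
      for x
      unfolding strict_argmax_def by measurable
  qed (auto intro: strict_argmax_unique)
qed

lemma measurable_cw_dyn:
  assumes "sets D = sets borel"
  shows "(\<lambda>U. cw_dyn U m1 m2 a0 n) \<in> payoff_space D m1 m2 \<rightarrow>\<^sub>M count_space UNIV"
proof (induction n)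
  case (Suc n)
  have "(\<lambda>U. if sc (Suc n) = 1 then (br U m1 m2 1 (snd a), snd a) else (fst a, br U m1 m2 2 (fst a)))
    \<in> payoff_space D m1 m2 \<rightarrow>\<^sub>M count_space UNIV" for a :: "nat \<times> nat"
    using measurable_br[OF assms] by (auto intro: measurable_compose[where N = "count_space UNIV"])
  from measurable_compose_countable[OF this Suc] show ?case
    by (simp add: Let_def)
qed simp

lemma sets_converges_at:
  assumes "sets D = sets borel"
  shows "{U \<in> space (payoff_space D m1 m2). converges_at (cw_dyn U m1 m2 a0) k t} \<in> sets (payoff_space D m1 m2)"
proof -
  note [measurable] = measurable_cw_dyn[OF assms]
  show ?thesis
    unfolding converges_at_def is_cycle_at_def by measurable
qed

lemma prob_converges_at_fixed_start:
  assumes "prob_space D" and "sets D = sets borel" and "\<And>x. measure D {x} = 0"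
    and "m1 \<ge> 1" and "m2 \<ge> 1" and "k \<ge> 1" and "t \<ge> 1" and a0: "snd a0 \<in> {1..m2}"
  shows "measure (payoff_space D m1 m2) {U \<in> space (payoff_space D m1 m2). converges_at (cw_dyn U m1 m2 a0) k t}
    = card (rho_shaped (nodes m1 m2) (successors m1 m2) (1, snd a0) (t - 1) (2 * k)) / card (response_graphs m1 m2)"
proof -
  let ?rho = "rho_shaped (nodes m1 m2) (successors m1 m2) (1, snd a0) (t - 1) (2 * k)"
  interpret prob_space "payoff_space D m1 m2"
    using assms(1) by (rule prob_space_payoff_space)
  have "response_graphs m1 m2 \<inter> ?rho = ?rho"
    using self_avoiding_subset by (fastforce simp: rho_shaped_def response_graphs_def)
  moreover have "prob {U \<in> space (payoff_space D m1 m2). converges_at (cw_dyn U m1 m2 a0) k t}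
    = card (response_graphs m1 m2 \<inter> ?rho) / card (response_graphs m1 m2)"
  proof (rule prob_exchangeable_partition[where E = "graph_event D m1 m2"])
    show "disjoint_family_on (graph_event D m1 m2) (response_graphs m1 m2)"
      unfolding disjoint_family_on_def using br_graph_eq by blast
    show "prob (graph_event D m1 m2 H) = prob (graph_event D m1 m2 H')"
      if "H \<in> response_graphs m1 m2" "H' \<in> response_graphs m1 m2" for H H'
      using emeasure_graph_event_eq[OF assms(1,2) that] by (simp add: measure_def)
    show "U \<in> {U \<in> space (payoff_space D m1 m2). converges_at (cw_dyn U m1 m2 a0) k t} \<longleftrightarrow> H \<in> ?rho"
      if "H \<in> response_graphs m1 m2" "U \<in> graph_event D m1 m2 H" for H U
      using that converges_at_iff_rho_shaped[OF _ a0 assms(6,7), of U] br_graph_eq[OF that]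
      by (auto simp: graph_event_def)
  qed (use assms sets_graph_event sets_converges_at AE_graph_event in \<open>auto simp: response_graphs_def finite_PiE\<close>)
  ultimately show ?thesis
    by simp
qed

theorem theorem3:
  fixes D :: "real measure" and m1 m2 k t :: nat
  assumes "prob_space D" and "sets D = sets borel" and "\<forall>x. measure D {x} = 0"
    and "m1 \<ge> 2" and "m2 \<ge> 2"
    and "k \<in> {1..min m1 m2}" and "t \<in> {1..2 * (min m1 m2 - k + 1)}"
  shows "measure (game_space D m1 m2)
           {\<omega> \<in> space (game_space D m1 m2). converges_at (cw_dyn (fst \<omega>) m1 m2 (snd \<omega>)) k t}
         = 1 / real (m_of m1 m2 (sc (t + 2 * k - 1)))
           * (\<Prod>i = 1..t + 2 * k - 2. (1 - 1 / real (m_of m1 m2 (sc i)) * real (i div 2)))"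
proof -
  have m: "m1 \<ge> 1" "m2 \<ge> 1" and kt: "k \<ge> 1" "t \<ge> 1"
    using assms(4-7) by auto
  let ?M = "{1..m1} \<times> {1..m2}"
  let ?event = "\<lambda>a. {U \<in> space (payoff_space D m1 m2). converges_at (cw_dyn U m1 m2 a) k t}"
  have "measure (payoff_space D m1 m2) (?event a)
    = 1 / real (m_of m1 m2 (sc (t + 2 * k - 1)))
      * (\<Prod>i = 1..t + 2 * k - 2. (1 - 1 / real (m_of m1 m2 (sc i)) * real (i div 2)))"
    if "a \<in> ?M" for a
    using prob_converges_at_fixed_start[OF assms(1,2) _ m kt] card_rho_shaped_ratio[OF m kt] assms(3) that
    by auto
  moreover have "measure (game_space D m1 m2)
      {\<omega> \<in> space (game_space D m1 m2). converges_at (cw_dyn (fst \<omega>) m1 m2 (snd \<omega>)) k t}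
    = (\<Sum>a\<in>?M. measure (payoff_space D m1 m2) (?event a)) / card ?M"
    unfolding game_space_eq using prob_space_payoff_space[OF assms(1)] m sets_converges_at[OF assms(2)]
    by (intro measure_pair_uniform_count_measure) auto
  ultimately show ?thesis
    using m by (simp add: card_cartesian_product)
qed

end
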